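(* For any instance, any real number $t\ge1$, any $t$-cohesive group $N^*$, and any allocation $R'$ selected by Generalized PAV, the average satisfaction of $N^*$ with respect to $R'$ is strictly greater than $t-1$.
   Context: Model: There is a set of agents $N=\{1,\dots,n\}$. The resource $R$ consists of a cake $C=[0,c]$ for a real $c\ge 0$ and a set of indivisible goods $G=\{g_1,\dots,g_m\}$ for an integer $m\ge 0$, with $\max(c,m)>0$. A piece of cake is a union of finitely many disjoint closed subintervals of $C$; its length $\ell(\cdot)$ is the sum of the lengths of its intervals. A bundle $R'=(C',G')$ consists of a piece of cake $C'\subseteq C$ and a set $G'\subseteq G$; its size is $s(R')=\ell(C')+|G'|$. Each agent $i$ approves a bundle $R_i=(C_i,G_i)$, and her utility for a bundle $R'$ is $u_i(R')=\ell(C_i\cap C')+|G_i\cap G'|$. A parameter $\alpha\in(0,c+m]$ is given; an allocation is a bundle $A$ with $s(A)\le\alpha$. For a real $t>0$, $N^*\subseteq N$ is $t$-cohesive if $|N^*|\ge t n/\alpha$ and $s(\bigcap_{i\in N^*}R_i)\ge t$. Generalized harmonic numbers: $H_x\coloneqq\sum_{k=1}^\infty\frac{x}{k(x+k)}$ for real $x\ge0$. Generalized PAV selects an allocation $R'$ with $s(R')\le\alpha$ maximizing $\sum_{i\in N}H_{u_i(R')}$. The average satisfaction of a group $N'\subseteq N$ with respect to $A$ is $\frac1{|N'|}\sum_{i\in N'}u_i(A)$. *)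

theory Defs
  imports "HOL-Analysis.Analysis"
begin

text \<open>A piece of the cake [0,c]: a finite union of closed subintervals of [0,c].
  (Any finite union of closed intervals is a finite union of disjoint closed intervals.)\<close>
definition is_piece :: "real \<Rightarrow> real set \<Rightarrow> bool" where
  "is_piece c P \<longleftrightarrow> P \<subseteq> {0..c} \<and>
     (\<exists>I :: (real \<times> real) set. finite I \<and> (\<forall>(a,b)\<in>I. a \<le> b) \<and>
        P = (\<Union>(a,b)\<in>I. {a..b}))"

definition cake_len :: "real set \<Rightarrow> real" where
  "cake_len P = measure lborel P"

definition is_bundle :: "real \<Rightarrow> 'g set \<Rightarrow> real set \<times> 'g set \<Rightarrow> bool" where
  "is_bundle c G B \<longleftrightarrow> is_piece c (fst B) \<and> snd B \<subseteq> G"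

definition bsize :: "real set \<times> 'g set \<Rightarrow> real" where
  "bsize B = cake_len (fst B) + real (card (snd B))"

definition util :: "real set \<times> 'g set \<Rightarrow> real set \<times> 'g set \<Rightarrow> real" where
  "util Ri B = cake_len (fst Ri \<inter> fst B) + real (card (snd Ri \<inter> snd B))"

definition is_allocation :: "real \<Rightarrow> 'g set \<Rightarrow> real \<Rightarrow> real set \<times> 'g set \<Rightarrow> bool" where
  "is_allocation c G \<alpha> A \<longleftrightarrow> is_bundle c G A \<and> bsize A \<le> \<alpha>"

definition genH :: "real \<Rightarrow> real" where
  "genH x = (\<Sum>k. x / (real (Suc k) * (x + real (Suc k))))"

definition pav_score :: "'a set \<Rightarrow> ('a \<Rightarrow> real set \<times> 'g set) \<Rightarrow> real set \<times> 'g set \<Rightarrow> real" where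
  "pav_score N R A = (\<Sum>i\<in>N. genH (util (R i) A))"

definition is_gpav ::
  "real \<Rightarrow> 'g set \<Rightarrow> 'a set \<Rightarrow> ('a \<Rightarrow> real set \<times> 'g set) \<Rightarrow> real \<Rightarrow> real set \<times> 'g set \<Rightarrow> bool" where
  "is_gpav c G N R \<alpha> A \<longleftrightarrow> is_allocation c G \<alpha> A \<and>
     (\<forall>B. is_allocation c G \<alpha> B \<longrightarrow> pav_score N R B \<le> pav_score N R A)"

definition common_bundle :: "'a set \<Rightarrow> ('a \<Rightarrow> real set \<times> 'g set) \<Rightarrow> real set \<times> 'g set" where
  "common_bundle S R = ((\<Inter>i\<in>S. fst (R i)), (\<Inter>i\<in>S. snd (R i)))"

definition cohesive :: "'a set \<Rightarrow> ('a \<Rightarrow> real set \<times> 'g set) \<Rightarrow> real \<Rightarrow> real \<Rightarrow> 'a set \<Rightarrow> bool" where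
  "cohesive N R \<alpha> t S \<longleftrightarrow> S \<subseteq> N \<and> real (card S) \<ge> t * real (card N) / \<alpha> \<and>
     bsize (common_bundle S R) \<ge> t"

definition avg_sat :: "'a set \<Rightarrow> ('a \<Rightarrow> real set \<times> 'g set) \<Rightarrow> real set \<times> 'g set \<Rightarrow> real" where
  "avg_sat S R A = (\<Sum>i\<in>S. util (R i) A) / real (card S)"

end

theory Submission
  imports Defs
begin

text \<open>Suppose the \<open>t\<close>-cohesive group \<open>S\<close> had average utility at most \<open>t - 1\<close> under a GPAV
  allocation \<open>A\<close>. Then some member has utility at most \<open>t - 1\<close>, so the common bundle of \<open>S\<close>, of
  size at least \<open>t\<close>, contains a unit \<open>Y\<close> (a good, or cake of length one) essentially disjoint
  from \<open>A\<close>. If \<open>A\<close> has room for \<open>Y\<close>, adding it raises the PAV score. Otherwise \<open>A\<close> is too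
  full by some \<open>\<delta> \<in> (0, 1]\<close>; removing from \<open>A\<close> either a slice of cake of length \<open>\<delta>\<close> or a
  single good, and adding \<open>Y\<close>, gives more than \<open>\<alpha> - 1\<close> feasible exchanges. Since
  \<open>H(u + 1 - x) - H(u) \<ge> (1 - x) / (u + 1)\<close> and \<open>H(u) - H(u - x) \<le> x / u\<close>, summing the score
  changes of all exchanges gives \<open>\<alpha> \<Sum>\<^bsub>i \<in> S\<^esub> 1 / (u\<^sub>i + 1) < n\<close>, whereas convexity of \<open>1 / y\<close>
  and cohesiveness give \<open>\<Sum>\<^bsub>i \<in> S\<^esub> 1 / (u\<^sub>i + 1) \<ge> |S| / t \<ge> n / \<alpha>\<close>.\<close>

section \<open>Generalized harmonic numbers\<close>

lemma sums_inverse_consecutive: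
  fixes a :: real
  assumes "a > 0"
  shows "(\<lambda>k. 1 / ((a + real k) * (a + real k + 1))) sums (1 / a)"
proof -
  have "(\<lambda>n. inverse (a + real n)) \<longlonglongrightarrow> 0"
    by (intro tendsto_inverse_0_at_top filterlim_tendsto_add_at_top[OF tendsto_const]
        filterlim_real_sequentially)
  then have "(\<lambda>n. 1 / (a + real n) - 1 / (a + real (Suc n))) sums (1 / (a + real 0) - 0)"
    by (intro telescope_sums') (simp add: divide_inverse)
  moreover have "1 / (a + real n) - 1 / (a + real (Suc n)) = 1 / ((a + real n) * (a + real n + 1))"
    for n
    using assms by (simp add: field_simps)
  ultimately show ?thesis
    by simp
qed

lemma genH_sums:
  assumes "a \<ge> 0"
  shows "(\<lambda>k. a / (real (Suc k) * (a + real (Suc k)))) sums genH a"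
proof -
  have "summable (\<lambda>k. a / (real (Suc k) * (a + real (Suc k))))"
  proof (rule summable_comparison_test')
    show "summable (\<lambda>k. 2 * a * (1 / ((1 + real k) * (1 + real k + 1))))"
      using sums_inverse_consecutive[of 1] by (intro summable_mult) (simp add: sums_iff)
    fix n :: nat
    have "a / (real (Suc n) * (a + real (Suc n))) \<le> a / ((1 + real n) * (1 + real n))"
      using assms by (intro divide_left_mono mult_left_mono) auto
    also have "\<dots> = (2 * a) / (2 * ((1 + real n) * (1 + real n)))"
      by simp
    also have "\<dots> \<le> (2 * a) / ((1 + real n) * (1 + real n + 1))"
      using assms by (intro divide_left_mono mult_pos_pos) (auto simp: algebra_simps)
    finally show "norm (a / (real (Suc n) * (a + real (Suc n))))
        \<le> 2 * a * (1 / ((1 + real n) * (1 + real n + 1)))"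
      using assms by simp
  qed
  then show ?thesis
    unfolding genH_def by (simp add: summable_sums)
qed

text \<open>Comparing this series termwise with the telescoping one of \<open>sums_inverse_consecutive\<close> gives
  the increment bounds below.\<close>
lemma genH_diff_sums:
  assumes "a \<ge> 0" "b \<ge> 0"
  shows "(\<lambda>k. (a - b) / ((a + real (Suc k)) * (b + real (Suc k)))) sums (genH a - genH b)"
proof -
  have "a / (s * (a + s)) - b / (s * (b + s)) = (a - b) / ((a + s) * (b + s))" if "s > 0" for s
  proof -
    have "d / (s * (d + s)) = 1 / s - 1 / (d + s)" if "d \<ge> 0" for d
      using that \<open>s > 0\<close> by (simp add: field_simps)
    moreover have "1 / (b + s) - 1 / (a + s) = (a - b) / ((a + s) * (b + s))"
      using that assms by (simp add: field_simps)
    ultimately show ?thesis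
      using assms by simp
  qed
  then show ?thesis
    using sums_diff[OF genH_sums[OF assms(1)] genH_sums[OF assms(2)]] by simp
qed

lemma genH_mono:
  assumes "0 \<le> a" "a \<le> b"
  shows "genH a \<le> genH b"
proof -
  have "0 \<le> genH b - genH a"
    using assms by (intro sums_le[OF _ sums_zero genH_diff_sums]) auto
  then show ?thesis
    by simp
qed

lemma genH_increment_ge:
  assumes "u \<ge> 0" "0 \<le> x" "x \<le> 1"
  shows "(1 - x) / (u + 1) \<le> genH (u + 1 - x) - genH u"
proof -
  have "(1 - x) * (1 / (u + 1)) \<le> genH (u + 1 - x) - genH u"
  proof (rule sums_le)
    show "(\<lambda>k. (1 - x) * (1 / ((u + 1 + real k) * (u + 1 + real k + 1)))) sums ((1 - x) * (1 / (u + 1)))"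
      using sums_inverse_consecutive[of "u + 1"] assms by (intro sums_mult) auto
    show "(\<lambda>k. (u + 1 - x - u) / ((u + 1 - x + real (Suc k)) * (u + real (Suc k))))
        sums (genH (u + 1 - x) - genH u)"
      using assms by (intro genH_diff_sums) auto
    fix k
    have "(u + 1 - x + real (Suc k)) * (u + real (Suc k)) \<le> (u + 1 + real k + 1) * (u + 1 + real k)"
      using assms by (intro mult_mono) auto
    then have "(u + 1 - x + real (Suc k)) * (u + real (Suc k)) \<le> (u + 1 + real k) * (u + 1 + real k + 1)"
      by (simp only: mult.commute)
    from divide_left_mono[OF this] have "(1 - x) / ((u + 1 + real k) * (u + 1 + real k + 1))
        \<le> (1 - x) / ((u + 1 - x + real (Suc k)) * (u + real (Suc k)))"
      using assms by (auto intro: mult_pos_pos)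
    moreover have "u + 1 - x - u = 1 - x"
      by simp
    ultimately show "(1 - x) * (1 / ((u + 1 + real k) * (u + 1 + real k + 1)))
        \<le> (u + 1 - x - u) / ((u + 1 - x + real (Suc k)) * (u + real (Suc k)))"
      by (simp only: times_divide_eq_right mult_1_right)
  qed
  then show ?thesis
    by (simp only: times_divide_eq_right mult_1_right)
qed

lemma genH_decrement_le:
  assumes "0 \<le> x" "x \<le> 1" "x \<le> u"
  shows "genH u - genH (u - x) \<le> x / u"
proof (cases "u = 0")
  case True
  then show ?thesis
    using assms by simp
next
  case False
  with assms have "u > 0"
    by simp
  have "genH u - genH (u - x) \<le> x * (1 / u)"
  proof (rule sums_le)
    show "(\<lambda>k. (u - (u - x)) / ((u + real (Suc k)) * (u - x + real (Suc k))))
        sums (genH u - genH (u - x))"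
      using assms by (intro genH_diff_sums) auto
    show "(\<lambda>k. x * (1 / ((u + real k) * (u + real k + 1)))) sums (x * (1 / u))"
      using sums_inverse_consecutive[OF \<open>u > 0\<close>] by (intro sums_mult)
    fix k
    have "(u + real k + 1) * (u + real k) \<le> (u + real (Suc k)) * (u - x + real (Suc k))"
      using assms \<open>u > 0\<close> by (intro mult_mono) auto
    then have "(u + real k) * (u + real k + 1) \<le> (u + real (Suc k)) * (u - x + real (Suc k))"
      by (simp only: mult.commute)
    from divide_left_mono[OF this] have "x / ((u + real (Suc k)) * (u - x + real (Suc k)))
        \<le> x / ((u + real k) * (u + real k + 1))"
      using assms \<open>u > 0\<close> by (auto intro: mult_pos_pos)
    moreover have "u - (u - x) = x"
      by simp
    ultimately show "(u - (u - x)) / ((u + real (Suc k)) * (u - x + real (Suc k)))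
        \<le> x * (1 / ((u + real k) * (u + real k + 1)))"
      by (simp only: times_divide_eq_right mult_1_right)
  qed
  then show ?thesis
    by (simp only: times_divide_eq_right mult_1_right)
qed

section \<open>Summing exchanges\<close>

lemma sum_genH_exchange_gain:
  fixes x v :: "'b \<Rightarrow> real"
  assumes "finite J" "u \<ge> 0"
    and x: "\<forall>j\<in>J. 0 \<le> x j \<and> x j \<le> 1" "(\<Sum>j\<in>J. x j) \<le> u"
    and v: "\<forall>j\<in>J. u - x j + 1 \<le> v j"
  shows "(real (card J) + 1) / (u + 1) - 1 \<le> (\<Sum>j\<in>J. genH (v j) - genH u)"
proof -
  have "(real (card J) + 1) / (u + 1) - 1 = (real (card J) - u) / (u + 1)"
    using \<open>u \<ge> 0\<close> by (simp add: field_simps)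
  also have "\<dots> \<le> (real (card J) - (\<Sum>j\<in>J. x j)) / (u + 1)"
    using x \<open>u \<ge> 0\<close> by (intro divide_right_mono) auto
  also have "\<dots> = (\<Sum>j\<in>J. (1 - x j) / (u + 1))"
    by (simp add: sum_divide_distrib[symmetric] sum_subtractf)
  also have "\<dots> \<le> (\<Sum>j\<in>J. genH (v j) - genH u)"
  proof (rule sum_mono)
    fix j
    assume "j \<in> J"
    then have "(1 - x j) / (u + 1) \<le> genH (u + 1 - x j) - genH u"
      using x \<open>u \<ge> 0\<close> by (intro genH_increment_ge) auto
    also have "\<dots> \<le> genH (v j) - genH u"
      using x v \<open>j \<in> J\<close> \<open>u \<ge> 0\<close> by (auto intro!: genH_mono)
    finally show "(1 - x j) / (u + 1) \<le> genH (v j) - genH u" .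
  qed
  finally show ?thesis .
qed

lemma sum_genH_exchange_loss:
  fixes x v :: "'b \<Rightarrow> real"
  assumes "finite J"
    and x: "\<forall>j\<in>J. 0 \<le> x j \<and> x j \<le> 1" "(\<Sum>j\<in>J. x j) \<le> u"
    and v: "\<forall>j\<in>J. u - x j \<le> v j"
  shows "- 1 \<le> (\<Sum>j\<in>J. genH (v j) - genH u)"
proof -
  have x_le: "x j \<le> u" if "j \<in> J" for j
    using member_le_sum[of j J x] x that \<open>finite J\<close> by auto
  have "0 \<le> u"
    using x sum_nonneg[of J x] by auto
  then have "- 1 \<le> - (\<Sum>j\<in>J. x j) / u"
    using x by (cases "u = 0") (auto simp: divide_le_eq)
  also have "\<dots> = (\<Sum>j\<in>J. - (x j / u))"
    by (simp add: sum_divide_distrib sum_negf)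
  also have "\<dots> \<le> (\<Sum>j\<in>J. genH (v j) - genH u)"
  proof (rule sum_mono)
    fix j
    assume "j \<in> J"
    then have "genH u - genH (u - x j) \<le> x j / u"
      using x x_le by (intro genH_decrement_le) auto
    moreover have "genH (u - x j) \<le> genH (v j)"
      using x v x_le \<open>j \<in> J\<close> by (intro genH_mono) auto
    ultimately show "- (x j / u) \<le> genH (v j) - genH u"
      by linarith
  qed
  finally show ?thesis .
qed

text \<open>Exchange \<open>j\<close> takes at most \<open>x j i\<close> from agent \<open>i\<close> and gives every member of \<open>S\<close> one
  more unit; the bound comes from summing the score changes of all exchanges.\<close>
lemma pav_exchange_count:
  fixes u :: "'a \<Rightarrow> real" and x v :: "'b \<Rightarrow> 'a \<Rightarrow> real"
  assumes "finite N" "S \<subseteq> N" "finite J" and u: "\<forall>i\<in>N. 0 \<le> u i"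
    and x: "\<forall>j\<in>J. \<forall>i\<in>N. 0 \<le> x j i \<and> x j i \<le> 1" "\<forall>i\<in>N. (\<Sum>j\<in>J. x j i) \<le> u i"
    and v: "\<forall>j\<in>J. \<forall>i\<in>N. u i - x j i \<le> v j i" "\<forall>j\<in>J. \<forall>i\<in>S. u i - x j i + 1 \<le> v j i"
    and opt: "\<forall>j\<in>J. (\<Sum>i\<in>N. genH (v j i)) \<le> (\<Sum>i\<in>N. genH (u i))"
  shows "(real (card J) + 1) * (\<Sum>i\<in>S. 1 / (u i + 1)) \<le> real (card N)"
proof -
  define D where "D i = (\<Sum>j\<in>J. genH (v j i) - genH (u i))" for i
  have "(real (card J) + 1) * (\<Sum>i\<in>S. 1 / (u i + 1)) - real (card N)
      = (\<Sum>i\<in>S. (real (card J) + 1) / (u i + 1) - 1) + (\<Sum>i\<in>N - S. - 1)"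
    using assms card_Diff_subset[of S N] card_mono[of N S]
    by (simp add: sum_distrib_left sum_subtractf finite_subset of_nat_diff)
  also have "\<dots> \<le> (\<Sum>i\<in>S. D i) + (\<Sum>i\<in>N - S. D i)"
  proof (intro add_mono sum_mono)
    fix i
    assume "i \<in> S"
    with assms show "(real (card J) + 1) / (u i + 1) - 1 \<le> D i"
      unfolding D_def by (intro sum_genH_exchange_gain[where x = "\<lambda>j. x j i"]) auto
  next
    fix i
    assume "i \<in> N - S"
    with assms show "- 1 \<le> D i"
      unfolding D_def by (intro sum_genH_exchange_loss[where x = "\<lambda>j. x j i"]) auto
  qed
  also have "\<dots> = (\<Sum>i\<in>N. D i)"
    using assms by (metis sum.subset_diff add.commute)
  also have "\<dots> = (\<Sum>j\<in>J. (\<Sum>i\<in>N. genH (v j i)) - (\<Sum>i\<in>N. genH (u i)))"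
    unfolding D_def by (simp add: sum.swap[of _ J] sum_subtractf sum_distrib_left)
  also have "\<dots> \<le> 0"
    using opt by (intro sum_nonpos) auto
  finally show ?thesis
    by simp
qed

lemma sum_inverse_succ_ge:
  fixes u :: "'a \<Rightarrow> real"
  assumes "finite S" "\<forall>i\<in>S. 0 \<le> u i" "t > 0" "(\<Sum>i\<in>S. u i) \<le> (t - 1) * real (card S)"
  shows "real (card S) / t \<le> (\<Sum>i\<in>S. 1 / (u i + 1))"
proof -
  have tangent: "2 / t - y / t\<^sup>2 \<le> 1 / y" if "y > 0" for y :: real
  proof -
    have "0 \<le> (y - t)\<^sup>2 / (y * t\<^sup>2)"
      using that by simp
    also have "\<dots> = 1 / y - (2 / t - y / t\<^sup>2)"
      using that \<open>t > 0\<close> by (simp add: field_simps power2_eq_square)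
    finally show ?thesis
      by simp
  qed
  have "real (card S) / t = 2 * real (card S) / t - t * real (card S) / t\<^sup>2"
    using \<open>t > 0\<close> by (simp add: field_simps power2_eq_square)
  also have "\<dots> \<le> 2 * real (card S) / t - ((\<Sum>i\<in>S. u i) + real (card S)) / t\<^sup>2"
    using assms by (intro diff_left_mono divide_right_mono) (auto simp: algebra_simps)
  also have "\<dots> = (\<Sum>i\<in>S. 2 / t - (u i + 1) / t\<^sup>2)"
    by (simp add: sum_subtractf sum_divide_distrib[symmetric] sum.distrib)
  also have "\<dots> \<le> (\<Sum>i\<in>S. 1 / (u i + 1))"
    using assms(2) by (intro sum_mono tangent) auto
  finally show ?thesis .
qed

section \<open>Pieces of cake\<close>

text \<open>Unlike \<open>is_piece\<close>, empty intervals are allowed and there is no ambient interval, so this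
  class is closed under intersection with half-lines.\<close>
definition Icc_union :: "real set \<Rightarrow> bool" where
  "Icc_union P \<longleftrightarrow> (\<exists>I. finite I \<and> P = (\<Union>p\<in>I. {fst p..snd p}))"

lemma is_piece_iff: "is_piece c P \<longleftrightarrow> Icc_union P \<and> P \<subseteq> {0..c}"
proof
  assume "is_piece c P"
  then obtain I where "finite I" "P = (\<Union>(a, b)\<in>I. {a..b})" "P \<subseteq> {0..c}"
    by (auto simp: is_piece_def)
  then show "Icc_union P \<and> P \<subseteq> {0..c}"
    unfolding Icc_union_def split_def by blast
next
  assume "Icc_union P \<and> P \<subseteq> {0..c}"
  then obtain I where I: "finite I" "P = (\<Union>p\<in>I. {fst p..snd p})" "P \<subseteq> {0..c}"
    by (auto simp: Icc_union_def)
  define I' where "I' = {p\<in>I. fst p \<le> snd p}"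
  have "(\<Union>p\<in>I. {fst p..snd p}) = (\<Union>p\<in>I'. {fst p..snd p})"
    unfolding I'_def by fastforce
  moreover have "finite I'" "\<forall>(a, b)\<in>I'. a \<le> b"
    using I(1) by (auto simp: I'_def)
  ultimately show "is_piece c P"
    unfolding is_piece_def split_def using I(2,3) by blast
qed

lemma Icc_union_empty: "Icc_union {}"
  unfolding Icc_union_def by (intro exI[of _ "{}"]) auto

lemma Icc_union_Un:
  assumes "Icc_union P" "Icc_union Q"
  shows "Icc_union (P \<union> Q)"
proof -
  obtain I J where "finite I" "P = (\<Union>p\<in>I. {fst p..snd p})" "finite J" "Q = (\<Union>p\<in>J. {fst p..snd p})"
    using assms by (auto simp: Icc_union_def)
  then show ?thesis
    unfolding Icc_union_def by (intro exI[of _ "I \<union> J"]) auto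
qed

lemma Icc_union_UN: "finite F \<Longrightarrow> (\<And>x. x \<in> F \<Longrightarrow> Icc_union (f x)) \<Longrightarrow> Icc_union (\<Union>x\<in>F. f x)"
  by (induction F rule: finite_induct) (auto intro: Icc_union_Un Icc_union_empty)

lemma Icc_union_Int_atMost:
  assumes "Icc_union P"
  shows "Icc_union (P \<inter> {..y})"
proof -
  obtain I where "finite I" "P = (\<Union>p\<in>I. {fst p..snd p})"
    using assms by (auto simp: Icc_union_def)
  then have "finite ((\<lambda>p. (fst p, min (snd p) y)) ` I)"
    "P \<inter> {..y} = (\<Union>p\<in>(\<lambda>p. (fst p, min (snd p) y)) ` I. {fst p..snd p})"
    by auto
  then show ?thesis
    unfolding Icc_union_def by blast
qed

lemma Icc_union_Int_atLeast:
  assumes "Icc_union P"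
  shows "Icc_union (P \<inter> {y..})"
proof -
  obtain I where "finite I" "P = (\<Union>p\<in>I. {fst p..snd p})"
    using assms by (auto simp: Icc_union_def)
  then have "finite ((\<lambda>p. (max (fst p) y, snd p)) ` I)"
    "P \<inter> {y..} = (\<Union>p\<in>(\<lambda>p. (max (fst p) y, snd p)) ` I. {fst p..snd p})"
    by auto
  then show ?thesis
    unfolding Icc_union_def by blast
qed

lemma Icc_union_Int:
  assumes "Icc_union P" "Icc_union Q"
  shows "Icc_union (P \<inter> Q)"
proof -
  obtain I where I: "finite I" "P = (\<Union>p\<in>I. {fst p..snd p})"
    using assms(1) by (auto simp: Icc_union_def)
  then have "P \<inter> Q = (\<Union>p\<in>I. Q \<inter> {..snd p} \<inter> {fst p..})"
    by auto
  with I assms(2) show ?thesis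
    by (simp add: Icc_union_UN Icc_union_Int_atMost Icc_union_Int_atLeast)
qed

text \<open>\<open>P - Q\<close> itself is not closed; the cover \<open>D\<close> adds only endpoints of the intervals of \<open>Q\<close>.\<close>
lemma Icc_union_Diff_cover:
  assumes "Icc_union P" "Icc_union Q"
  obtains D where "Icc_union D" "D \<subseteq> P" "P - Q \<subseteq> D" "finite (D \<inter> Q)"
proof -
  obtain I where I: "finite I" "Q = (\<Union>p\<in>I. {fst p..snd p})"
    using assms(2) by (auto simp: Icc_union_def)
  have "\<exists>D. Icc_union D \<and> D \<subseteq> P \<and> P - (\<Union>p\<in>I. {fst p..snd p}) \<subseteq> D
      \<and> finite (D \<inter> (\<Union>p\<in>I. {fst p..snd p}))"
    using I(1) assms(1)
  proof (induction I arbitrary: P rule: finite_induct)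
    case empty
    then show ?case
      by (intro exI[of _ P]) auto
  next
    case (insert q I)
    define D1 where "D1 = P \<inter> {..fst q} \<union> P \<inter> {snd q..}"
    have "Icc_union D1"
      using insert.prems by (simp add: D1_def Icc_union_Un Icc_union_Int_atMost Icc_union_Int_atLeast)
    then obtain D2 where D2: "Icc_union D2" "D2 \<subseteq> D1" "D1 - (\<Union>p\<in>I. {fst p..snd p}) \<subseteq> D2"
        "finite (D2 \<inter> (\<Union>p\<in>I. {fst p..snd p}))"
      using insert.IH by blast
    have "D2 \<inter> (\<Union>p\<in>insert q I. {fst p..snd p})
        \<subseteq> {fst q, snd q} \<union> (D2 \<inter> (\<Union>p\<in>I. {fst p..snd p}))"
      using D2(2) by (auto simp: D1_def)
    then have "finite (D2 \<inter> (\<Union>p\<in>insert q I. {fst p..snd p}))"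
      by (rule finite_subset) (simp add: D2(4))
    moreover have "D2 \<subseteq> P" "P - (\<Union>p\<in>insert q I. {fst p..snd p}) \<subseteq> D2"
      using D2(2,3) by (auto simp: D1_def)
    ultimately show ?case
      using D2(1) by blast
  qed
  with I(2) that show ?thesis
    by blast
qed

lemma closed_Icc_union: "Icc_union P \<Longrightarrow> closed P"
  by (auto simp: Icc_union_def intro!: closed_UN)

lemma is_piece_Un: "is_piece c P \<Longrightarrow> is_piece c Q \<Longrightarrow> is_piece c (P \<union> Q)"
  by (simp add: is_piece_iff Icc_union_Un)

lemma is_piece_Int: "is_piece c P \<Longrightarrow> is_piece c Q \<Longrightarrow> is_piece c (P \<inter> Q)"
  by (auto simp: is_piece_iff Icc_union_Int)

lemma is_piece_INT:
  "finite S \<Longrightarrow> S \<noteq> {} \<Longrightarrow> (\<And>i. i \<in> S \<Longrightarrow> is_piece c (f i)) \<Longrightarrow> is_piece c (\<Inter>i\<in>S. f i)"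
  by (induction S rule: finite_ne_induct) (auto intro: is_piece_Int)

lemma is_piece_Int_atMost: "is_piece c P \<Longrightarrow> is_piece c (P \<inter> {..y})"
  by (auto simp: is_piece_iff Icc_union_Int_atMost)

lemma is_piece_Int_outside: "is_piece c P \<Longrightarrow> is_piece c (P \<inter> ({..a} \<union> {b..}))"
  by (auto simp: is_piece_iff Int_Un_distrib Icc_union_Un Icc_union_Int_atMost Icc_union_Int_atLeast)

lemma fmeasurable_subset_Icc:
  fixes E :: "real set"
  assumes "E \<in> sets lborel" "E \<subseteq> {a..b}"
  shows "E \<in> fmeasurable lborel"
proof (rule fmeasurableI2[OF _ assms(2,1)])
  show "{a..b} \<in> fmeasurable lborel"
    using fmeasurable_cbox[of a b] by (simp only: cbox_interval)
qed

lemma is_piece_fmeasurable: "is_piece c P \<Longrightarrow> P \<in> fmeasurable lborel"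
  using closed_Icc_union by (intro fmeasurable_subset_Icc) (auto simp: is_piece_iff)

section \<open>Measure of cuts of the cake\<close>

lemma measure_lborel_finite: "finite X \<Longrightarrow> measure lborel (X :: 'a::euclidean_space set) = 0"
  by (simp add: measure_def emeasure_lborel_countable countable_finite)

lemma measure_Un_finite_Int:
  fixes X Y :: "'a::euclidean_space set"
  assumes "X \<in> fmeasurable lborel" "Y \<in> fmeasurable lborel" "finite (X \<inter> Y)"
  shows "measure lborel (X \<union> Y) = measure lborel X + measure lborel Y"
proof -
  have "measure lborel (X \<inter> Y) = 0"
    using assms(3) by (rule measure_lborel_finite)
  then show ?thesis
    using measure_Un3[OF assms(1,2)] by simp
qed

lemma measure_Int_atMost_split:
  fixes E :: "real set"
  assumes "E \<in> fmeasurable lborel" "a \<le> b"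
  shows "measure lborel (E \<inter> {..b}) = measure lborel (E \<inter> {..a}) + measure lborel (E \<inter> {a..b})"
proof -
  have "E \<inter> {..b} = E \<inter> {..a} \<union> E \<inter> {a..b}"
    using assms(2) by auto
  moreover have "finite ((E \<inter> {..a}) \<inter> (E \<inter> {a..b}))"
    by (rule finite_subset[of _ "{a}"]) auto
  ultimately show ?thesis
    using assms(1) by (simp add: measure_Un_finite_Int fmeasurable_Int_fmeasurable)
qed

lemma measure_Int_outside:
  fixes E :: "real set"
  assumes "E \<in> fmeasurable lborel" "a \<le> b"
  shows "measure lborel (E \<inter> ({..a} \<union> {b..})) = measure lborel E - measure lborel (E \<inter> {a..b})"
proof -
  have "E = E \<inter> ({..a} \<union> {b..}) \<union> E \<inter> {a..b}"
    using assms(2) by auto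
  moreover have "finite ((E \<inter> ({..a} \<union> {b..})) \<inter> (E \<inter> {a..b}))"
    by (rule finite_subset[of _ "{a, b}"]) auto
  ultimately have "measure lborel E = measure lborel (E \<inter> ({..a} \<union> {b..})) + measure lborel (E \<inter> {a..b})"
    using assms(1) by (metis measure_Un_finite_Int fmeasurable_Int_fmeasurable sets_lborel sets.Un
        atMost_borel atLeast_borel atLeastAtMost_borel)
  then show ?thesis
    by simp
qed

lemma lipschitz_measure_Int_atMost:
  fixes E :: "real set"
  assumes "E \<in> fmeasurable lborel"
  shows "1-lipschitz_on X (\<lambda>z. measure lborel (E \<inter> {..z}))"
proof (rule lipschitz_onI)
  have increment: "\<bar>measure lborel (E \<inter> {..v}) - measure lborel (E \<inter> {..w})\<bar> \<le> v - w"
    if "w \<le> v" for v w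
  proof -
    have "measure lborel (E \<inter> {w..v}) \<le> measure lborel {w..v}"
      using assms fmeasurable_cbox[of w v] by (intro measure_mono_fmeasurable) (auto simp: cbox_interval)
    then show ?thesis
      using measure_Int_atMost_split[OF assms that] measure_nonneg[of lborel "E \<inter> {w..v}"] that by simp
  qed
  show "dist (measure lborel (E \<inter> {..v})) (measure lborel (E \<inter> {..w})) \<le> 1 * dist v w" for v w
    using increment[of w v] increment[of v w]
    by (cases "w \<le> v") (simp_all add: dist_real_def abs_minus_commute)
qed simp

lemma measure_Int_atMost_IVT:
  fixes E :: "real set"
  assumes "E \<in> sets lborel" "E \<subseteq> {a..b}" "0 \<le> y" "y \<le> measure lborel E"
  obtains z where "measure lborel (E \<inter> {..z}) = y"
proof -
  have E: "E \<in> fmeasurable lborel"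
    using assms(1,2) by (rule fmeasurable_subset_Icc)
  have "E \<inter> {..a} \<subseteq> {a}"
    using assms(2) by auto
  then have "measure lborel (E \<inter> {..a}) = 0"
    by (intro measure_lborel_finite) (rule finite_subset, auto)
  consider "y = 0" | "y > 0"
    using assms(3) by linarith
  then show ?thesis
  proof cases
    case 1
    with \<open>measure lborel (E \<inter> {..a}) = 0\<close> show ?thesis
      by (intro that[of a]) simp
  next
    case 2
    have "a \<le> b"
    proof (rule ccontr)
      assume "\<not> a \<le> b"
      with assms(2) have "E = {}"
        by auto
      with 2 assms(4) show False
        by simp
    qed
    moreover have "E \<inter> {..b} = E"
      using assms(2) by auto
    ultimately obtain z where "measure lborel (E \<inter> {..z}) = y"
      using IVT'[of "\<lambda>z. measure lborel (E \<inter> {..z})" a y b] \<open>measure lborel (E \<inter> {..a}) = 0\<close>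
        lipschitz_on_continuous_on[OF lipschitz_measure_Int_atMost[OF E]] assms(3,4)
      by auto
    with that show ?thesis .
  qed
qed

lemma sum_measure_slices_le:
  fixes E :: "real set"
  assumes "E \<in> fmeasurable lborel" "\<forall>i<k. p i \<le> p (Suc i)"
  shows "(\<Sum>i<k. measure lborel (E \<inter> {p i..p (Suc i)})) \<le> measure lborel E"
proof -
  have "(\<Sum>i<k. measure lborel (E \<inter> {p i..p (Suc i)}))
      = (\<Sum>i<k. measure lborel (E \<inter> {..p (Suc i)}) - measure lborel (E \<inter> {..p i}))"
    using measure_Int_atMost_split[OF assms(1)] assms(2) by (intro sum.cong) auto
  also have "\<dots> = measure lborel (E \<inter> {..p k}) - measure lborel (E \<inter> {..p 0})"
    by (rule sum_lessThan_telescope)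
  also have "\<dots> \<le> measure lborel E"
  proof -
    have "measure lborel (E \<inter> {..p k}) \<le> measure lborel E"
      using assms(1) by (intro measure_mono_fmeasurable) auto
    then show ?thesis
      using measure_nonneg[of lborel "E \<inter> {..p 0}"] by linarith
  qed
  finally show ?thesis .
qed

lemma measure_slices:
  fixes E :: "real set"
  assumes "E \<in> sets lborel" "E \<subseteq> {a..b}" "\<delta> > 0"
  obtains k p where "\<forall>i<k. p i \<le> p (Suc i) \<and> measure lborel (E \<inter> {p i..p (Suc i)}) = \<delta>"
    "measure lborel E < (real k + 1) * \<delta>"
proof -
  have E: "E \<in> fmeasurable lborel"
    using assms(1,2) by (rule fmeasurable_subset_Icc)
  define k where "k = nat \<lfloor>measure lborel E / \<delta>\<rfloor>"
  have "real k = of_int \<lfloor>measure lborel E / \<delta>\<rfloor>"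
    using assms(3) by (simp add: k_def)
  then have "real k \<le> measure lborel E / \<delta>" "measure lborel E / \<delta> < real k + 1"
    using of_int_floor_le[of "measure lborel E / \<delta>"] real_of_int_floor_add_one_gt[of "measure lborel E / \<delta>"]
    by linarith+
  then have k: "real k * \<delta> \<le> measure lborel E" "measure lborel E < (real k + 1) * \<delta>"
    using assms(3) by (simp_all add: pos_le_divide_eq pos_divide_less_eq)
  have "\<exists>z. measure lborel (E \<inter> {..z}) = real j * \<delta>" if "j \<le> k" for j
  proof -
    have "real j * \<delta> \<le> real k * \<delta>"
      using that assms(3) by (intro mult_right_mono) auto
    then have "0 \<le> real j * \<delta>" "real j * \<delta> \<le> measure lborel E"
      using k assms(3) by (simp, linarith)
    then show ?thesis
      using measure_Int_atMost_IVT[OF assms(1,2)] by blast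
  qed
  then obtain p where p: "\<And>j. j \<le> k \<Longrightarrow> measure lborel (E \<inter> {..p j}) = real j * \<delta>"
    by metis
  have "p i \<le> p (Suc i) \<and> measure lborel (E \<inter> {p i..p (Suc i)}) = \<delta>" if "i < k" for i
  proof
    show "p i \<le> p (Suc i)"
    proof (rule ccontr)
      assume "\<not> p i \<le> p (Suc i)"
      then have "measure lborel (E \<inter> {..p (Suc i)}) \<le> measure lborel (E \<inter> {..p i})"
        using E by (intro measure_mono_fmeasurable fmeasurable_Int_fmeasurable) auto
      with p[of i] p[of "Suc i"] that assms(3) show False
        by (simp add: algebra_simps)
    qed
    then show "measure lborel (E \<inter> {p i..p (Suc i)}) = \<delta>"
      using measure_Int_atMost_split[OF E] p[of i] p[of "Suc i"] that by (simp add: algebra_simps)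
  qed
  with k that show ?thesis
    by blast
qed

definition bundle_Un :: "real set \<times> 'g set \<Rightarrow> real set \<times> 'g set \<Rightarrow> real set \<times> 'g set" where
  "bundle_Un B Y = (fst B \<union> fst Y, snd B \<union> snd Y)"

lemma util_commute: "util B B' = util B' B"
  by (simp add: util_def Int_commute)

lemma util_nonneg: "0 \<le> util B B'"
  by (simp add: util_def cake_len_def)

lemma util_mono:
  assumes "finite G" "is_bundle c G Ri" "is_bundle c G B" "is_bundle c G B'"
    and "fst B \<subseteq> fst B'" "snd B \<subseteq> snd B'"
  shows "util Ri B \<le> util Ri B'"
proof -
  have "measure lborel (fst Ri \<inter> fst B) \<le> measure lborel (fst Ri \<inter> fst B')"
    using assms is_piece_fmeasurable
    by (intro measure_mono_fmeasurable) (auto simp: is_bundle_def intro: fmeasurable.Int)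
  moreover have "card (snd Ri \<inter> snd B) \<le> card (snd Ri \<inter> snd B')"
    using assms by (intro card_mono) (auto simp: is_bundle_def intro: finite_subset)
  ultimately show ?thesis
    by (simp add: util_def cake_len_def)
qed

lemma is_bundle_bundle_Un: "is_bundle c G B \<Longrightarrow> is_bundle c G Y \<Longrightarrow> is_bundle c G (bundle_Un B Y)"
  by (simp add: is_bundle_def bundle_Un_def is_piece_Un)

lemma bsize_bundle_Un_le:
  assumes "is_bundle c G B" "is_bundle c G Y"
  shows "bsize (bundle_Un B Y) \<le> bsize B + bsize Y"
proof -
  have "fst B \<in> sets lborel" "fst Y \<in> sets lborel"
    using assms fmeasurableD[OF is_piece_fmeasurable] by (auto simp: is_bundle_def)
  then have "measure lborel (fst B \<union> fst Y) \<le> measure lborel (fst B) + measure lborel (fst Y)"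
    by (rule measure_Un_le)
  moreover have "card (snd B \<union> snd Y) \<le> card (snd B) + card (snd Y)"
    by (rule card_Un_le)
  ultimately show ?thesis
    by (simp add: bsize_def bundle_Un_def cake_len_def)
qed

lemma util_bundle_Un:
  assumes "finite G" "is_bundle c G Ri" "is_bundle c G B" "is_bundle c G Y"
    and "fst Y \<subseteq> fst Ri" "snd Y \<subseteq> snd Ri" "finite (fst B \<inter> fst Y)" "snd B \<inter> snd Y = {}"
  shows "util Ri (bundle_Un B Y) = util Ri B + bsize Y"
proof -
  have "fst Ri \<inter> (fst B \<union> fst Y) = fst Ri \<inter> fst B \<union> fst Y"
    "snd Ri \<inter> (snd B \<union> snd Y) = snd Ri \<inter> snd B \<union> snd Y"
    using assms(5,6) by auto
  moreover have "measure lborel (fst Ri \<inter> fst B \<union> fst Y)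
      = measure lborel (fst Ri \<inter> fst B) + measure lborel (fst Y)"
    using assms(2-4,7) is_piece_fmeasurable
    by (intro measure_Un_finite_Int) (auto simp: is_bundle_def intro: fmeasurable.Int finite_subset)
  moreover have "card (snd Ri \<inter> snd B \<union> snd Y) = card (snd Ri \<inter> snd B) + card (snd Y)"
    using assms(1-4,8) by (intro card_Un_disjoint) (auto simp: is_bundle_def intro: finite_subset)
  ultimately show ?thesis
    by (simp add: util_def bsize_def bundle_Un_def cake_len_def)
qed

lemma is_bundle_common_bundle:
  assumes "finite S" "S \<noteq> {}" "\<forall>i\<in>S. is_bundle c G (R i)"
  shows "is_bundle c G (common_bundle S R)"
  using assms by (auto simp: is_bundle_def common_bundle_def intro!: is_piece_INT)

text \<open>The unit is a good of \<open>T\<close> missing from \<open>A\<close>, or else cake of length one cut from \<open>T - A\<close>.\<close>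
lemma unit_bundle_outside:
  assumes "finite G" "is_bundle c G T" "is_bundle c G A" "util T A + 1 \<le> bsize T"
  obtains Y where "is_bundle c G Y" "fst Y \<subseteq> fst T" "snd Y \<subseteq> snd T"
    "finite (fst A \<inter> fst Y)" "snd A \<inter> snd Y = {}" "bsize Y = 1"
proof (cases "snd T \<subseteq> snd A")
  case False
  then obtain g where "g \<in> snd T" "g \<notin> snd A"
    by auto
  with assms(2) show ?thesis
    by (intro that[of "({}, {g})"]) (auto simp: is_bundle_def bsize_def cake_len_def
        is_piece_iff Icc_union_empty)
next
  case True
  obtain Tc Ac where Tc: "is_piece c Tc" "fst T = Tc" and Ac: "is_piece c Ac" "fst A = Ac"
    using assms(2,3) by (auto simp: is_bundle_def)
  have "measure lborel Tc \<le> measure lborel (Tc - Ac) + measure lborel (Tc \<inter> Ac)"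
    using is_piece_fmeasurable[OF Tc(1)] is_piece_fmeasurable[OF Ac(1)]
    by (metis Diff_Int_distrib2 Un_Diff_Int fmeasurable.Diff fmeasurable.Int fmeasurableD measure_Un_le)
  moreover have "snd T \<inter> snd A = snd T"
    using True by auto
  ultimately have "1 \<le> measure lborel (Tc - Ac)"
    using assms(4) Tc Ac by (simp add: util_def bsize_def cake_len_def)
  moreover obtain D where D: "Icc_union D" "D \<subseteq> Tc" "Tc - Ac \<subseteq> D" "finite (D \<inter> Ac)"
    using Icc_union_Diff_cover Tc(1) Ac(1) by (metis is_piece_iff)
  moreover have D_piece: "is_piece c D"
    using D Tc(1) by (auto simp: is_piece_iff)
  ultimately have "1 \<le> measure lborel D"
    using is_piece_fmeasurable[OF Tc(1)] is_piece_fmeasurable[OF Ac(1)] is_piece_fmeasurable[OF D_piece]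
    by (meson fmeasurable.Diff fmeasurableD measure_mono_fmeasurable order_trans)
  moreover have "D \<in> sets lborel" "D \<subseteq> {0..c}"
    using D_piece fmeasurableD[OF is_piece_fmeasurable] by (auto simp: is_piece_iff)
  ultimately obtain z where z: "measure lborel (D \<inter> {..z}) = 1"
    using measure_Int_atMost_IVT[of D 0 c 1] by auto
  have "is_piece c (D \<inter> {..z})"
    using D Tc(1) by (intro is_piece_Int_atMost) (auto simp: is_piece_iff)
  with D Tc Ac z show ?thesis
    by (intro that[of "(D \<inter> {..z}, {})"])
      (auto simp: is_bundle_def bsize_def cake_len_def intro: finite_subset)
qed

text \<open>\<open>K i\<close> is \<open>E\<close> without the \<open>i\<close>-th slice of \<open>measure_slices\<close>; the costs telescope.\<close>
lemma cake_removals: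
  assumes "is_piece c E" "0 < \<delta>"
  obtains k K where "\<forall>i<k. is_piece c (K i) \<and> K i \<subseteq> E \<and> measure lborel (K i) = measure lborel E - \<delta>"
    "measure lborel E < (real k + 1) * \<delta>"
    "\<forall>C\<in>sets lborel. (\<forall>i<k. measure lborel (C \<inter> E) - measure lborel (C \<inter> K i) \<le> \<delta>) \<and>
       (\<Sum>i<k. measure lborel (C \<inter> E) - measure lborel (C \<inter> K i)) \<le> measure lborel (C \<inter> E)"
proof -
  have E: "E \<in> fmeasurable lborel"
    using assms(1) by (rule is_piece_fmeasurable)
  obtain k p where p: "\<forall>i<k. p i \<le> p (Suc i) \<and> measure lborel (E \<inter> {p i..p (Suc i)}) = \<delta>"
    and k: "measure lborel E < (real k + 1) * \<delta>"
    using measure_slices[OF fmeasurableD[OF E] _ assms(2), of 0 c] assms(1) by (auto simp: is_piece_iff)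
  define K where "K i = E \<inter> ({..p i} \<union> {p (Suc i)..})" for i
  have cost: "measure lborel (C \<inter> E) - measure lborel (C \<inter> K i) = measure lborel (C \<inter> E \<inter> {p i..p (Suc i)})"
    if "C \<in> sets lborel" "i < k" for C i
  proof -
    have "C \<inter> K i = (C \<inter> E) \<inter> ({..p i} \<union> {p (Suc i)..})"
      by (auto simp: K_def)
    with measure_Int_outside[OF fmeasurable_Int_fmeasurable[OF E that(1), unfolded Int_commute[of E]]] p that(2)
    show ?thesis
      by simp
  qed
  have "\<forall>i<k. is_piece c (K i) \<and> K i \<subseteq> E \<and> measure lborel (K i) = measure lborel E - \<delta>"
    using assms(1) p measure_Int_outside[OF E] by (auto simp: K_def is_piece_Int_outside)
  moreover note k
  moreover have "\<forall>C\<in>sets lborel. (\<forall>i<k. measure lborel (C \<inter> E) - measure lborel (C \<inter> K i) \<le> \<delta>) \<and>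
       (\<Sum>i<k. measure lborel (C \<inter> E) - measure lborel (C \<inter> K i)) \<le> measure lborel (C \<inter> E)"
  proof (intro ballI conjI allI impI)
    fix C :: "real set" and i
    assume C: "C \<in> sets lborel"
    assume "i < k"
    have "measure lborel (C \<inter> E \<inter> {p i..p (Suc i)}) \<le> measure lborel (E \<inter> {p i..p (Suc i)})"
      using E C by (intro measure_mono_fmeasurable fmeasurable_Int_fmeasurable) auto
    with cost[OF C \<open>i < k\<close>] p \<open>i < k\<close> show "measure lborel (C \<inter> E) - measure lborel (C \<inter> K i) \<le> \<delta>"
      by simp
  next
    fix C :: "real set"
    assume C: "C \<in> sets lborel"
    then have "C \<inter> E \<in> fmeasurable lborel"
      using E by (metis fmeasurable_Int_fmeasurable Int_commute)
    with cost[OF C] p show "(\<Sum>i<k. measure lborel (C \<inter> E) - measure lborel (C \<inter> K i)) \<le> measure lborel (C \<inter> E)"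
      using sum_measure_slices_le[of "C \<inter> E" k p] by simp
  qed
  ultimately show ?thesis
    by (rule that)
qed

lemma card_Int_remove:
  assumes "finite F" "g \<in> F"
  shows "real (card (X \<inter> F)) - real (card (X \<inter> (F - {g}))) = (if g \<in> X then 1 else 0)"
proof (cases "g \<in> X")
  case True
  then have "X \<inter> (F - {g}) = (X \<inter> F) - {g}" "g \<in> X \<inter> F"
    using assms(2) by auto
  moreover have "card (X \<inter> F) \<ge> 1"
    using assms(1) \<open>g \<in> X \<inter> F\<close> by (metis One_nat_def Suc_leI card_gt_0_iff empty_iff finite_Int)
  ultimately show ?thesis
    using assms(1) True by (simp add: card_Diff_singleton of_nat_diff)
next
  case False
  then have "X \<inter> (F - {g}) = X \<inter> F"
    by auto
  with False show ?thesis
    by simp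
qed

text \<open>\<open>P j\<close> is \<open>A\<close> without one slice of cake of length \<open>\<delta>\<close> (\<open>j = Inl i\<close>) or without one good
  (\<open>j = Inr g\<close>).\<close>
lemma bundle_removals:
  fixes A :: "real set \<times> 'g set"
  assumes "is_bundle c G A" "finite (snd A)" "0 < \<delta>" "\<delta> \<le> 1"
  obtains J :: "(nat + 'g) set" and P :: "nat + 'g \<Rightarrow> real set \<times> 'g set"
  where "finite J" "bsize A - \<delta> < real (card J)"
    "\<forall>j\<in>J. is_bundle c G (P j) \<and> fst (P j) \<subseteq> fst A \<and> snd (P j) \<subseteq> snd A \<and> bsize (P j) \<le> bsize A - \<delta>"
    "\<forall>Ri. is_bundle c G Ri \<longrightarrow>
       (\<forall>j\<in>J. util Ri A - util Ri (P j) \<le> 1) \<and> (\<Sum>j\<in>J. util Ri A - util Ri (P j)) \<le> util Ri A"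
proof -
  obtain k K where K: "\<forall>i<k. is_piece c (K i) \<and> K i \<subseteq> fst A \<and> measure lborel (K i) = measure lborel (fst A) - \<delta>"
    and k: "measure lborel (fst A) < (real k + 1) * \<delta>"
    and cost: "\<forall>C\<in>sets lborel. (\<forall>i<k. measure lborel (C \<inter> fst A) - measure lborel (C \<inter> K i) \<le> \<delta>) \<and>
       (\<Sum>i<k. measure lborel (C \<inter> fst A) - measure lborel (C \<inter> K i)) \<le> measure lborel (C \<inter> fst A)"
    using cake_removals[of c "fst A" \<delta>] assms(1,3) by (auto simp: is_bundle_def)
  define J :: "(nat + 'g) set" where "J = Inl ` {..<k} \<union> Inr ` snd A"
  define P :: "nat + 'g \<Rightarrow> real set \<times> 'g set"
    where "P = case_sum (\<lambda>i. (K i, snd A)) (\<lambda>g. (fst A, snd A - {g}))"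
  have "finite J"
    using assms(2) by (simp add: J_def)
  have "card J = card (Inl ` {..<k} :: (nat + 'g) set) + card (Inr ` snd A :: (nat + 'g) set)"
    unfolding J_def using assms(2) by (intro card_Un_disjoint) auto
  then have "card J = k + card (snd A)"
    by (simp add: card_image)
  moreover have "real k * \<delta> \<le> real k"
    using assms(4) by (simp add: mult_left_le)
  moreover have "(real k + 1) * \<delta> = real k * \<delta> + \<delta>"
    by (simp add: algebra_simps)
  ultimately have "bsize A - \<delta> < real (card J)"
    using k by (simp add: bsize_def cake_len_def)
  moreover have "\<forall>j\<in>J. is_bundle c G (P j) \<and> fst (P j) \<subseteq> fst A \<and> snd (P j) \<subseteq> snd A \<and> bsize (P j) \<le> bsize A - \<delta>"
  proof
    fix j
    assume "j \<in> J"
    then consider i where "i < k" "j = Inl i" | g where "g \<in> snd A" "j = Inr g"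
      by (auto simp: J_def)
    then show "is_bundle c G (P j) \<and> fst (P j) \<subseteq> fst A \<and> snd (P j) \<subseteq> snd A \<and> bsize (P j) \<le> bsize A - \<delta>"
    proof cases
      case 1
      with K assms(1) show ?thesis
        by (auto simp: P_def is_bundle_def bsize_def cake_len_def)
    next
      case 2
      then have "card (snd A) \<ge> 1"
        using assms(2) by (metis One_nat_def Suc_leI card_gt_0_iff empty_iff)
      with 2 assms show ?thesis
        by (auto simp: P_def is_bundle_def bsize_def cake_len_def card_Diff_singleton of_nat_diff)
    qed
  qed
  moreover have "(\<forall>j\<in>J. util Ri A - util Ri (P j) \<le> 1) \<and> (\<Sum>j\<in>J. util Ri A - util Ri (P j)) \<le> util Ri A"
    if "is_bundle c G Ri" for Ri
  proof -
    have C: "fst Ri \<in> sets lborel"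
      using that fmeasurableD[OF is_piece_fmeasurable] by (auto simp: is_bundle_def)
    have cake: "util Ri A - util Ri (P (Inl i)) = measure lborel (fst Ri \<inter> fst A) - measure lborel (fst Ri \<inter> K i)" for i
      by (simp add: util_def P_def cake_len_def)
    have goods: "util Ri A - util Ri (P (Inr g)) = (if g \<in> snd Ri then 1 else 0)" if "g \<in> snd A" for g
      using card_Int_remove[OF assms(2) that, of "snd Ri"] by (simp add: util_def P_def cake_len_def)
    have "\<forall>j\<in>J. util Ri A - util Ri (P j) \<le> 1"
      using cost C cake goods assms(4) by (fastforce simp: J_def)
    moreover have "(\<Sum>j\<in>J. util Ri A - util Ri (P j))
        = (\<Sum>i<k. util Ri A - util Ri (P (Inl i))) + (\<Sum>g\<in>snd A. util Ri A - util Ri (P (Inr g)))"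
      unfolding J_def using assms(2)
      by (subst sum.union_disjoint) (auto simp: sum.reindex)
    moreover have "(\<Sum>g\<in>snd A. util Ri A - util Ri (P (Inr g))) = real (card (snd Ri \<inter> snd A))"
      using goods assms(2) by (simp add: sum.If_cases Int_commute)
    moreover have "(\<Sum>i<k. util Ri A - util Ri (P (Inl i))) \<le> measure lborel (fst Ri \<inter> fst A)"
      using cost C by (simp add: cake)
    moreover have "util Ri A = measure lborel (fst Ri \<inter> fst A) + real (card (snd Ri \<inter> snd A))"
      by (simp add: util_def cake_len_def)
    ultimately show ?thesis
      by linarith
  qed
  ultimately show ?thesis
    using \<open>finite J\<close> that by blast
qed

section \<open>Exchanges against a GPAV allocation\<close>

lemma genH_less_succ:
  assumes "0 \<le> u"
  shows "genH u < genH (u + 1)"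
proof -
  have "1 / (u + 1) \<le> genH (u + 1) - genH u"
    using genH_increment_ge[of u 0] assms by simp
  moreover have "0 < 1 / (u + 1)"
    using assms by simp
  ultimately show ?thesis
    by linarith
qed

lemma is_allocation_bundle_Un:
  "is_bundle c G B \<Longrightarrow> is_bundle c G Y \<Longrightarrow> bsize B + bsize Y \<le> \<alpha> \<Longrightarrow> is_allocation c G \<alpha> (bundle_Un B Y)"
  using bsize_bundle_Un_le is_bundle_bundle_Un by (fastforce simp: is_allocation_def)

definition approved_unit ::
  "real \<Rightarrow> 'g set \<Rightarrow> ('a \<Rightarrow> real set \<times> 'g set) \<Rightarrow> 'a set \<Rightarrow> real set \<times> 'g set \<Rightarrow> real set \<times> 'g set \<Rightarrow> bool"
  where "approved_unit c G R S A Y \<longleftrightarrow> is_bundle c G Y \<and> bsize Y = 1 \<and>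
    (\<forall>i\<in>S. fst Y \<subseteq> fst (R i) \<and> snd Y \<subseteq> snd (R i)) \<and> finite (fst A \<inter> fst Y) \<and> snd A \<inter> snd Y = {}"

lemma util_bundle_Un_approved_unit:
  assumes "finite G" "\<forall>i\<in>N. is_bundle c G (R i)" "S \<subseteq> N" "approved_unit c G R S A Y"
    and "is_bundle c G B" "fst B \<subseteq> fst A" "snd B \<subseteq> snd A"
  shows "\<forall>i\<in>N. util (R i) B \<le> util (R i) (bundle_Un B Y)"
    and "\<forall>i\<in>S. util (R i) (bundle_Un B Y) = util (R i) B + 1"
proof -
  have "finite (fst A \<inter> fst Y)"
    using assms(4) by (simp add: approved_unit_def)
  then have "finite (fst B \<inter> fst Y)"
    by (rule finite_subset[rotated]) (use assms(6) in auto)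
  then have Y: "is_bundle c G Y" "bsize Y = 1" "finite (fst B \<inter> fst Y)" "snd B \<inter> snd Y = {}"
    using assms(4,7) by (auto simp: approved_unit_def)
  show "\<forall>i\<in>N. util (R i) B \<le> util (R i) (bundle_Un B Y)"
    using assms(2) util_mono[OF assms(1) _ assms(5) is_bundle_bundle_Un[OF assms(5) Y(1)]]
    by (simp add: bundle_Un_def)
  show "\<forall>i\<in>S. util (R i) (bundle_Un B Y) = util (R i) B + 1"
  proof
    fix i
    assume "i \<in> S"
    with assms(2-4) have "is_bundle c G (R i)" "fst Y \<subseteq> fst (R i)" "snd Y \<subseteq> snd (R i)"
      by (auto simp: approved_unit_def)
    with util_bundle_Un[OF assms(1) _ assms(5) Y(1) _ _ Y(3,4)] Y(2)
    show "util (R i) (bundle_Un B Y) = util (R i) B + 1"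
      by simp
  qed
qed

text \<open>If there were room for an approved unit next to a GPAV allocation \<open>A\<close>, adding it would raise
  the score.\<close>
lemma gpav_no_room_for_unit:
  assumes "finite N" "finite G" "\<forall>i\<in>N. is_bundle c G (R i)" "is_gpav c G N R \<alpha> A"
    and "S \<subseteq> N" "S \<noteq> {}" "approved_unit c G R S A Y"
  shows "\<alpha> < bsize A + 1"
proof (rule ccontr)
  assume "\<not> \<alpha> < bsize A + 1"
  have A: "is_bundle c G A"
    using assms(4) by (simp add: is_gpav_def is_allocation_def)
  then have "is_allocation c G \<alpha> (bundle_Un A Y)"
    using assms(7) \<open>\<not> \<alpha> < bsize A + 1\<close> by (intro is_allocation_bundle_Un) (auto simp: approved_unit_def)
  then have "pav_score N R (bundle_Un A Y) \<le> pav_score N R A"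
    using assms(4) unfolding is_gpav_def by blast
  moreover have "pav_score N R A < pav_score N R (bundle_Un A Y)"
    unfolding pav_score_def
  proof (rule sum_strict_mono_ex1)
    note util = util_bundle_Un_approved_unit[OF assms(2,3,5,7) A subset_refl subset_refl]
    show "\<forall>i\<in>N. genH (util (R i) A) \<le> genH (util (R i) (bundle_Un A Y))"
      using util(1) util_nonneg genH_mono by blast
    obtain i where "i \<in> S"
      using assms(6) by blast
    then have "i \<in> N" "genH (util (R i) A) < genH (util (R i) (bundle_Un A Y))"
      using util(2) assms(5) genH_less_succ[OF util_nonneg[of "R i" A]] by auto
    then show "\<exists>i\<in>N. genH (util (R i) A) < genH (util (R i) (bundle_Un A Y))"
      by blast
  qed (rule assms(1))
  ultimately show False
    by linarith
qed

text \<open>By \<open>gpav_no_room_for_unit\<close>, \<open>A\<close> is too full by some \<open>\<delta> \<in> (0, 1]\<close>, so exchanging any of the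
  removals of \<open>bundle_removals\<close> for the unit is feasible, and no exchange may raise the score.\<close>
lemma gpav_unit_exchange:
  assumes "finite N" "finite G" "\<forall>i\<in>N. is_bundle c G (R i)" "is_gpav c G N R \<alpha> A"
    and "S \<subseteq> N" "S \<noteq> {}" "approved_unit c G R S A Y"
  shows "\<alpha> * (\<Sum>i\<in>S. 1 / (util (R i) A + 1)) < real (card N)"
proof -
  have A: "is_bundle c G A" "bsize A \<le> \<alpha>"
    using assms(4) by (simp_all add: is_gpav_def is_allocation_def)
  define \<delta> where "\<delta> = bsize A + 1 - \<alpha>"
  have "0 < \<delta>" "\<delta> \<le> 1"
    using gpav_no_room_for_unit[OF assms] A(2) by (simp_all add: \<delta>_def)
  moreover have "finite (snd A)"
    using A(1) assms(2) finite_subset by (auto simp: is_bundle_def)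
  ultimately obtain J :: "(nat + 'b) set" and P where J: "finite J" "bsize A - \<delta> < real (card J)"
    and P: "\<forall>j\<in>J. is_bundle c G (P j) \<and> fst (P j) \<subseteq> fst A \<and> snd (P j) \<subseteq> snd A \<and> bsize (P j) \<le> bsize A - \<delta>"
    and cost: "\<forall>Ri. is_bundle c G Ri \<longrightarrow>
       (\<forall>j\<in>J. util Ri A - util Ri (P j) \<le> 1) \<and> (\<Sum>j\<in>J. util Ri A - util Ri (P j)) \<le> util Ri A"
    using bundle_removals[OF A(1)] by metis
  define u where "u i = util (R i) A" for i
  have "(real (card J) + 1) * (\<Sum>i\<in>S. 1 / (u i + 1)) \<le> real (card N)"
  proof (rule pav_exchange_count[OF assms(1,5) J(1), where x = "\<lambda>j i. u i - util (R i) (P j)"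
        and v = "\<lambda>j i. util (R i) (bundle_Un (P j) Y)"])
    have util_P: "util (R i) (P j) \<le> u i" if "i \<in> N" "j \<in> J" for i j
      using util_mono[OF assms(2) _ _ A(1)] assms(3) P that unfolding u_def by blast
    have cost_i: "(\<forall>j\<in>J. u i - util (R i) (P j) \<le> 1) \<and> (\<Sum>j\<in>J. u i - util (R i) (P j)) \<le> u i"
      if "i \<in> N" for i
      using cost assms(3) that unfolding u_def by blast
    show "\<forall>i\<in>N. 0 \<le> u i"
      by (simp add: u_def util_nonneg)
    show "\<forall>j\<in>J. \<forall>i\<in>N. 0 \<le> u i - util (R i) (P j) \<and> u i - util (R i) (P j) \<le> 1"
      using util_P cost_i by simp
    show "\<forall>i\<in>N. (\<Sum>j\<in>J. u i - util (R i) (P j)) \<le> u i"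
      using cost_i by simp
    note extend = util_bundle_Un_approved_unit[OF assms(2,3,5,7)]
    show "\<forall>j\<in>J. \<forall>i\<in>N. u i - (u i - util (R i) (P j)) \<le> util (R i) (bundle_Un (P j) Y)"
      using extend(1) P by simp
    show "\<forall>j\<in>J. \<forall>i\<in>S. u i - (u i - util (R i) (P j)) + 1 \<le> util (R i) (bundle_Un (P j) Y)"
      using extend(2) P by simp
    show "\<forall>j\<in>J. (\<Sum>i\<in>N. genH (util (R i) (bundle_Un (P j) Y))) \<le> (\<Sum>i\<in>N. genH (u i))"
    proof
      fix j
      assume "j \<in> J"
      with P assms(7) have "is_allocation c G \<alpha> (bundle_Un (P j) Y)"
        by (intro is_allocation_bundle_Un) (auto simp: approved_unit_def \<delta>_def)
      with assms(4) show "(\<Sum>i\<in>N. genH (util (R i) (bundle_Un (P j) Y))) \<le> (\<Sum>i\<in>N. genH (u i))"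
        unfolding is_gpav_def pav_score_def u_def by blast
    qed
  qed
  moreover have "0 < (\<Sum>i\<in>S. 1 / (u i + 1))"
    using assms(1,5,6) finite_subset util_nonneg[of "R _" A]
    by (intro sum_pos) (auto simp: u_def add_nonneg_pos)
  moreover have "\<alpha> < real (card J) + 1"
    using J(2) by (simp add: \<delta>_def)
  ultimately show ?thesis
    unfolding u_def by (meson mult_strict_right_mono order_less_le_trans)
qed

lemma approved_unit_exists:
  assumes "finite G" "finite S" "i \<in> S" "\<forall>i\<in>S. is_bundle c G (R i)" "is_bundle c G A"
    and "util (R i) A + 1 \<le> bsize (common_bundle S R)"
  obtains Y where "approved_unit c G R S A Y"
proof -
  have T: "is_bundle c G (common_bundle S R)"
    using assms(2-4) is_bundle_common_bundle by blast
  have "fst (common_bundle S R) \<subseteq> fst (R i)" "snd (common_bundle S R) \<subseteq> snd (R i)"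
    using assms(3) by (auto simp: common_bundle_def)
  then have "util A (common_bundle S R) \<le> util A (R i)"
    using assms(3,4) by (intro util_mono[OF assms(1) assms(5) T]) auto
  with assms(6) have "util (common_bundle S R) A + 1 \<le> bsize (common_bundle S R)"
    by (simp add: util_commute)
  then obtain Y where "is_bundle c G Y" "fst Y \<subseteq> fst (common_bundle S R)" "snd Y \<subseteq> snd (common_bundle S R)"
    "finite (fst A \<inter> fst Y)" "snd A \<inter> snd Y = {}" "bsize Y = 1"
    using unit_bundle_outside[OF assms(1) T assms(5)] by blast
  then have "approved_unit c G R S A Y"
    by (auto simp: approved_unit_def common_bundle_def)
  with that show ?thesis .
qed

lemma exists_le_average:
  fixes u :: "'a \<Rightarrow> real"
  assumes "finite S" "S \<noteq> {}" "(\<Sum>i\<in>S. u i) \<le> a * real (card S)"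
  obtains i where "i \<in> S" "u i \<le> a"
proof (rule ccontr)
  assume "\<not> thesis"
  with that have "(\<Sum>i\<in>S. a) < (\<Sum>i\<in>S. u i)"
    using assms(1,2) by (intro sum_strict_mono) force+
  with assms(3) show False
    by (simp add: mult.commute)
qed

theorem mainTheorem19:
  fixes N :: "'a set" and G :: "'g set" and c \<alpha> t :: real
    and R :: "'a \<Rightarrow> real set \<times> 'g set" and S :: "'a set" and A :: "real set \<times> 'g set"
  assumes "finite N" and "N \<noteq> {}"
    and "finite G"
    and "c \<ge> 0" and "max c (real (card G)) > 0"
    and "0 < \<alpha>" and "\<alpha> \<le> c + real (card G)"
    and "\<forall>i\<in>N. is_bundle c G (R i)"
    and "t \<ge> 1"
    and "cohesive N R \<alpha> t S"
    and "is_gpav c G N R \<alpha> A"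
  shows "avg_sat S R A > t - 1"
proof (rule ccontr)
  assume "\<not> avg_sat S R A > t - 1"
  define u where "u i = util (R i) A" for i
  have S: "S \<subseteq> N" "t * real (card N) / \<alpha> \<le> real (card S)" "t \<le> bsize (common_bundle S R)"
    using assms(10) by (simp_all add: cohesive_def)
  moreover have "0 < t * real (card N) / \<alpha>"
    using assms(1,2,6,9) by (simp add: card_gt_0_iff)
  ultimately have "0 < real (card S)"
    by linarith
  then have "finite S" "S \<noteq> {}"
    by (auto simp: card_gt_0_iff)
  have A: "is_bundle c G A"
    using assms(11) by (simp add: is_gpav_def is_allocation_def)
  have avg: "(\<Sum>i\<in>S. u i) \<le> (t - 1) * real (card S)"
    using \<open>\<not> avg_sat S R A > t - 1\<close> pos_divide_le_eq[OF \<open>0 < real (card S)\<close>]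
    by (simp add: avg_sat_def u_def not_less)
  then obtain i0 where "i0 \<in> S" "u i0 \<le> t - 1"
    using exists_le_average[OF \<open>finite S\<close> \<open>S \<noteq> {}\<close>] by blast
  have "\<forall>i\<in>S. is_bundle c G (R i)"
    using assms(8) S(1) by blast
  moreover have "util (R i0) A + 1 \<le> bsize (common_bundle S R)"
    using \<open>u i0 \<le> t - 1\<close> S(3) by (simp add: u_def)
  ultimately obtain Y where "approved_unit c G R S A Y"
    by (rule approved_unit_exists[OF assms(3) \<open>finite S\<close> \<open>i0 \<in> S\<close> _ A])
  then have exchange: "\<alpha> * (\<Sum>i\<in>S. 1 / (u i + 1)) < real (card N)"
    unfolding u_def using gpav_unit_exchange assms(1,3,8,11) S(1) \<open>S \<noteq> {}\<close> by blast
  have "real (card N) \<le> \<alpha> * (real (card S) / t)"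
    using S(2) assms(6,9) by (simp add: field_simps)
  also have "\<dots> \<le> \<alpha> * (\<Sum>i\<in>S. 1 / (u i + 1))"
    using sum_inverse_succ_ge[OF \<open>finite S\<close> _ _ avg] assms(6,9)
    by (intro mult_left_mono) (auto simp: u_def util_nonneg)
  finally show False
    using exchange by simp
qed

end
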